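(* Let $A\in\mathbb{R}^{n\times d}$, let $f:\mathbb{R}^n\to\mathbb{R}\cup\{+\infty\}$ and $g:\mathbb{R}^d\to\mathbb{R}\cup\{+\infty\}$ be closed convex functions, and suppose $f$ is $(1/\gamma)$-smooth for some $\gamma\ge 0$ and $g$ is $\mu$-strongly convex for some $\mu\ge 0$. Let $R=\|A\|_2$ and $F(x,y)=g(x)+\langle y,Ax\rangle-f^*(y)$. Run the DAPD method (described in the context) for $T\ge 1$ iterations with positive step sizes satisfying, for all $t=0,\dots,T-1$, $$\eta_t(1+B_{t-1}\mu)\ge \beta_t,\qquad \eta_t\tau_t\le \frac{1}{R^2},\qquad \frac{\beta_{t+1}}{\tau_{t+1}}\le \frac{\beta_t}{\tau_t}(1+\gamma\tau_t).$$ Define $\hat{x}^T=\frac{1}{B_{T-1}}\sum_{t=0}^{T-1}\beta_t\bar{x}^{t+1}$ and $\hat{y}^T=\frac{1}{B_{T-1}}\sum_{t=0}^{T-1}\beta_t y^{t+1}$. Then for every $x\in\mathbb{R}^d$ and $y\in\mathbb{R}^n$, $$F(\hat{x}^T,y)-F(x,\hat{y}^T)\le \frac{1}{B_{T-1}}\left(\frac{\beta_0}{2\tau_0}\|y^0-y\|_2^2+\frac12\|x^0-x\|_2^2\right).$$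
   Context: $f^*$ denotes the convex conjugate of $f$; $\operatorname{prox}_h(u)=\arg\min_v\{h(v)+\frac12\|v-u\|_2^2\}$. "$f$ is $(1/\gamma)$-smooth with $\gamma\ge0$" is the paper's convention: $\gamma=0$ means $f$ need not be smooth; $\gamma>0$ means $f$ is differentiable with $(1/\gamma)$-Lipschitz gradient. $\mu=0$ means $g$ is merely convex. DAPD method: given initial points $x^0\in\mathbb{R}^d$, $y^0\in\mathbb{R}^n$ and positive step sizes $\{\beta_t\},\{\eta_t\},\{\tau_t\}$, set $B_t=\sum_{k=0}^t\beta_k$ (with $B_{-1}=0$) and for $t=0,1,2,\dots$ compute $\bar{x}^{t+1}=\operatorname{prox}_{\eta_t g}(x^t-\eta_t A^\top y^t)$, $y^{t+1}=\operatorname{prox}_{\tau_t f^*}(y^t+\tau_t A\bar{x}^{t+1})$, $x^{t+1}=\operatorname{prox}_{B_t g}\big(x^0-\sum_{k=0}^t\beta_k A^\top y^{k+1}\big)$. *)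

theory Defs
  imports "HOL-Analysis.Analysis"
begin

text \<open>Extended-real valued functions with values in real union {+infinity}:
  we use type ereal together with the properness assumption below.\<close>

definition proper_fun :: "('a \<Rightarrow> ereal) \<Rightarrow> bool" where
  "proper_fun f \<longleftrightarrow> (\<forall>x. f x \<noteq> -\<infinity>) \<and> (\<exists>x. f x \<noteq> \<infinity>)"

definition closed_fun :: "('a::topological_space \<Rightarrow> ereal) \<Rightarrow> bool" where
  "closed_fun f \<longleftrightarrow> closed {(x, t::real). f x \<le> ereal t}"

definition convex_fun :: "('a::real_vector \<Rightarrow> ereal) \<Rightarrow> bool" where
  "convex_fun f \<longleftrightarrow> (\<forall>x y t. 0 < t \<and> t < 1 \<longrightarrow>
      f (t *\<^sub>R x + (1 - t) *\<^sub>R y) \<le> ereal t * f x + ereal (1 - t) * f y)"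

definition strongly_convex_fun :: "real \<Rightarrow> ('a::real_normed_vector \<Rightarrow> ereal) \<Rightarrow> bool" where
  "strongly_convex_fun \<mu> f \<longleftrightarrow> (\<forall>x y t. 0 < t \<and> t < 1 \<longrightarrow>
      f (t *\<^sub>R x + (1 - t) *\<^sub>R y) \<le> ereal t * f x + ereal (1 - t) * f y
        - ereal (\<mu> / 2 * t * (1 - t) * (norm (x - y))\<^sup>2))"

text \<open>(1/gamma)-smoothness in the paper's convention: no condition if gamma = 0;
  for gamma > 0, f is real-valued, differentiable, with (1/gamma)-Lipschitz gradient.\<close>
definition smooth_fun :: "real \<Rightarrow> ('a::real_inner \<Rightarrow> ereal) \<Rightarrow> bool" where
  "smooth_fun \<gamma> f \<longleftrightarrow> (\<gamma> > 0 \<longrightarrow>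
     (\<forall>x. \<bar>f x\<bar> \<noteq> \<infinity>) \<and>
     (\<exists>G. (\<forall>x. ((\<lambda>z. real_of_ereal (f z)) has_derivative (\<lambda>h. G x \<bullet> h)) (at x)) \<and>
          (\<forall>x y. norm (G x - G y) \<le> (1 / \<gamma>) * norm (x - y))))"

definition conjugate :: "('a::real_inner \<Rightarrow> ereal) \<Rightarrow> 'a \<Rightarrow> ereal" where
  "conjugate f y = (SUP x. ereal (y \<bullet> x) - f x)"

definition prox :: "('a::real_normed_vector \<Rightarrow> ereal) \<Rightarrow> 'a \<Rightarrow> 'a" where
  "prox h u = (SOME v. \<forall>w. h v + ereal ((norm (v - u))\<^sup>2 / 2) \<le> h w + ereal ((norm (w - u))\<^sup>2 / 2))"

definition saddleF :: "(real^'d \<Rightarrow> ereal) \<Rightarrow> (real^'n \<Rightarrow> ereal) \<Rightarrow> real^'d^'n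
     \<Rightarrow> real^'d \<Rightarrow> real^'n \<Rightarrow> ereal" where
  "saddleF g f A x y = g x + ereal (y \<bullet> (A *v x)) - conjugate f y"

end

theory Submission
  imports Defs
begin

text \<open>The primal sequence x is dual averaging: x (t + 1) minimises the sum over k \<le> t of the
  linearised losses \<beta> k * (g w + <y (k + 1), A w>) plus |w - x 0|^2 / 2, a strongly convex function
  with modulus 1 + \<mu> * (\<beta> 0 + ... + \<beta> t), so the be-the-leader argument bounds the losses
  accumulated along x by those at any comparison point u. The extrapolated point xbar and the dual
  point y satisfy three-point prox inequalities; their coupling term
  <y (t + 1) - y t, A (xbar (t + 1) - x (t + 1))> is absorbed by Young's inequality because
  \<eta> t * \<tau> t * |A|^2 \<le> 1, and the step-size rules make the dual distances telescope. Finally g and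
  the conjugate of f, which is \<gamma>-strongly convex because f is (1/\<gamma>)-smooth, are convex, so
  Jensen's inequality passes the weighted bound to the averaged iterates.\<close>

section \<open>Extended-real convex functions\<close>

lemma ereal_convex_comb_mono:
  fixes a b a' b' :: ereal
  assumes "a \<le> a'" "b \<le> b'" "0 \<le> t" "t \<le> 1"
  shows "ereal t * a + ereal (1 - t) * b \<le> ereal t * a' + ereal (1 - t) * b'"
  using assms by (intro add_mono ereal_mult_left_mono) auto

lemma convex_funD_le:
  assumes "convex_fun h" "h a \<le> ereal r" "h b \<le> ereal s" "0 < t" "t < 1"
  shows "h (t *\<^sub>R a + (1 - t) *\<^sub>R b) \<le> ereal (t * r + (1 - t) * s)"
proof -
  have "h (t *\<^sub>R a + (1 - t) *\<^sub>R b) \<le> ereal t * h a + ereal (1 - t) * h b"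
    using assms(1,4,5) unfolding convex_fun_def by blast
  also have "\<dots> \<le> ereal t * ereal r + ereal (1 - t) * ereal s"
    using assms(2-5) by (intro ereal_convex_comb_mono) auto
  finally show ?thesis by simp
qed

lemma strongly_convex_funD_le:
  assumes "strongly_convex_fun \<sigma> h" "h a \<le> ereal r" "h b \<le> ereal s" "0 < t" "t < 1"
  shows "h (t *\<^sub>R a + (1 - t) *\<^sub>R b)
           \<le> ereal (t * r + (1 - t) * s - \<sigma> / 2 * t * (1 - t) * (norm (a - b))\<^sup>2)"
proof -
  let ?m = "ereal (\<sigma> / 2 * t * (1 - t) * (norm (a - b))\<^sup>2)"
  have "h (t *\<^sub>R a + (1 - t) *\<^sub>R b) \<le> ereal t * h a + ereal (1 - t) * h b - ?m"
    using assms(1,4,5) unfolding strongly_convex_fun_def by blast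
  also have "\<dots> \<le> ereal t * ereal r + ereal (1 - t) * ereal s - ?m"
    using assms(2-5) by (intro ereal_minus_mono ereal_convex_comb_mono) auto
  finally show ?thesis by simp
qed

lemma strongly_convex_imp_convex_fun:
  assumes "\<sigma> \<ge> 0" "strongly_convex_fun \<sigma> h" "\<And>x. h x \<noteq> -\<infinity>"
  shows "convex_fun h"
  unfolding convex_fun_def
proof (intro allI impI)
  fix a b and t :: real assume t: "0 < t \<and> t < 1"
  show "h (t *\<^sub>R a + (1 - t) *\<^sub>R b) \<le> ereal t * h a + ereal (1 - t) * h b"
  proof (cases "h a = \<infinity> \<or> h b = \<infinity>")
    case True
    with t assms(3)[of a] assms(3)[of b] show ?thesis
      by (cases "h a"; cases "h b") (auto simp: ereal_mult_infty)
  next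
    case False
    then obtain r s where "h a = ereal r" "h b = ereal s"
      using assms(3)[of a] assms(3)[of b] by (cases "h a"; cases "h b") auto
    moreover have "\<sigma> / 2 * t * (1 - t) * (norm (a - b))\<^sup>2 \<ge> 0" using assms(1) t by simp
    ultimately show ?thesis
      using strongly_convex_funD_le[OF assms(2), of a r b s t] t by (simp add: order_trans)
  qed
qed

lemma proper_fun_scale:
  assumes "c > 0" "proper_fun h"
  shows "proper_fun (\<lambda>w. ereal c * h w)"
proof -
  obtain x where x: "h x \<noteq> \<infinity>" using assms(2) unfolding proper_fun_def by auto
  have "ereal c * h z \<noteq> -\<infinity>" for z
    using assms unfolding proper_fun_def by (cases "h z") auto
  moreover have "ereal c * h x \<noteq> \<infinity>"
    using x assms(1) by (cases "h x") auto
  ultimately show ?thesis unfolding proper_fun_def by blast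
qed

lemma closed_fun_scale:
  assumes "c > 0" "closed_fun h"
  shows "closed_fun (\<lambda>w. ereal c * h w)"
proof -
  have "ereal c * a \<le> ereal t \<longleftrightarrow> a \<le> ereal (t / c)" for a t
    using assms(1) by (cases a) (auto simp: field_simps)
  then have "{(x, t). ereal c * h x \<le> ereal t} = (\<lambda>p. (fst p, snd p / c)) -` {(x, t). h x \<le> ereal t}"
    by auto
  also have "closed \<dots>"
    using assms unfolding closed_fun_def
    by (intro closed_vimage) (auto intro!: continuous_intros)
  finally show ?thesis unfolding closed_fun_def .
qed

lemma strongly_convex_fun_scale:
  fixes h :: "'a::real_normed_vector \<Rightarrow> ereal"
  assumes c: "c > 0" and sc: "strongly_convex_fun \<sigma> h" and np: "\<And>x. h x \<noteq> -\<infinity>"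
  shows "strongly_convex_fun (c * \<sigma>) (\<lambda>w. ereal c * h w)"
  unfolding strongly_convex_fun_def
proof (intro allI impI)
  fix a b :: 'a and t :: real assume t: "0 < t \<and> t < 1"
  let ?m = "c * \<sigma> / 2 * t * (1 - t) * (norm (a - b))\<^sup>2"
  show "ereal c * h (t *\<^sub>R a + (1 - t) *\<^sub>R b)
        \<le> ereal t * (ereal c * h a) + ereal (1 - t) * (ereal c * h b) - ereal ?m"
  proof (cases "h a = \<infinity> \<or> h b = \<infinity>")
    case True
    with t c np[of a] np[of b] show ?thesis
      by (cases "h a"; cases "h b") (auto simp: ereal_mult_infty)
  next
    case False
    then obtain r s where rs: "h a = ereal r" "h b = ereal s"
      using np[of a] np[of b] by (cases "h a"; cases "h b") auto
    have "ereal c * h (t *\<^sub>R a + (1 - t) *\<^sub>R b)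
          \<le> ereal c * ereal (t * r + (1 - t) * s - \<sigma> / 2 * t * (1 - t) * (norm (a - b))\<^sup>2)"
      using strongly_convex_funD_le[OF sc, of a r b s t] rs t c by (intro ereal_mult_left_mono) auto
    also have "\<dots> = ereal t * (ereal c * ereal r) + ereal (1 - t) * (ereal c * ereal s) - ereal ?m"
      by (simp add: algebra_simps)
    finally show ?thesis using rs by simp
  qed
qed

lemma convex_epigraph:
  assumes "convex_fun h"
  shows "convex {(x, t). h x \<le> ereal t}"
proof (rule convexI)
  fix p q :: "'a \<times> real" and s r :: real
  assume p: "p \<in> {(x, t). h x \<le> ereal t}" and q: "q \<in> {(x, t). h x \<le> ereal t}"
    and sr: "0 \<le> s" "0 \<le> r" "s + r = 1"
  show "s *\<^sub>R p + r *\<^sub>R q \<in> {(x, t). h x \<le> ereal t}"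
  proof (cases "s = 0 \<or> r = 0")
    case True
    with p q sr show ?thesis by auto
  next
    case False
    with sr have "0 < s" "s < 1" "r = 1 - s" by auto
    with p q convex_funD_le[OF assms, of "fst p" "snd p" "fst q" "snd q" s] show ?thesis
      by (auto simp: case_prod_beta)
  qed
qed

lemma convex_fun_affine_minorant:
  fixes h :: "'a::euclidean_space \<Rightarrow> ereal"
  assumes proper: "proper_fun h" and closed: "closed_fun h" and convex: "convex_fun h"
  shows "\<exists>a b. \<forall>x. ereal (a \<bullet> x - b) \<le> h x"
proof -
  define E where "E = {(x, t::real). h x \<le> ereal t}"
  obtain x0 r0 where r0: "h x0 = ereal r0"
    using proper unfolding proper_fun_def by (metis ereal_cases)
  have "(x0, r0 - 1) \<notin> E" using r0 unfolding E_def by simp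
  then obtain n b where sep: "n \<bullet> (x0, r0 - 1) < b" "\<forall>p\<in>E. b < n \<bullet> p"
    using separating_hyperplane_closed_point[of E] convex_epigraph[OF convex] closed
    unfolding E_def closed_fun_def by blast
  obtain a \<alpha> where n: "n = (a, \<alpha>)" by (cases n)
  have "(x0, r0) \<in> E" using r0 unfolding E_def by simp
  with sep n have "\<alpha> > 0" by (force simp: algebra_simps)
  have "ereal ((- (1 / \<alpha>) *\<^sub>R a) \<bullet> x - (- b / \<alpha>)) \<le> h x" for x
  proof (cases "h x")
    case (real r)
    then have "b < a \<bullet> x + \<alpha> * r" using sep(2) n unfolding E_def by auto
    with \<open>\<alpha> > 0\<close> show ?thesis using real by (simp add: field_simps)
  qed (use proper in \<open>auto simp: proper_fun_def\<close>)
  then show ?thesis by blast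
qed

lemma bounded_between_affine_and_paraboloid:
  fixes a u :: "'a::real_inner"
  shows "bounded {(w, t). a \<bullet> w - b \<le> t \<and> t + (norm (w - u))\<^sup>2 / 2 \<le> C}" (is "bounded ?S")
proof -
  define \<rho> where "\<rho> = sqrt (2 * (C + b - a \<bullet> u) + (norm a)\<^sup>2)"
  define lo where "lo = - (norm a * (norm (u - a) + \<rho>)) - b"
  have "(w, t) \<in> cball (u - a) \<rho> \<times> {lo..C}"
    if wt: "a \<bullet> w - b \<le> t" "t + (norm (w - u))\<^sup>2 / 2 \<le> C" for w t
  proof -
    have "(norm (w - (u - a)))\<^sup>2 = (norm (w - u))\<^sup>2 + 2 * (a \<bullet> (w - u)) + (norm a)\<^sup>2"
      by (simp add: power2_norm_eq_inner algebra_simps inner_commute)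
    also have "\<dots> \<le> 2 * (C + b - a \<bullet> u) + (norm a)\<^sup>2"
      using wt by (simp add: inner_diff_right)
    finally have near: "norm (w - (u - a)) \<le> \<rho>" unfolding \<rho>_def by (rule real_le_rsqrt)
    have "norm w \<le> norm (u - a) + \<rho>"
      using norm_triangle_ineq[of "u - a" "w - (u - a)"] near by simp
    then have "norm a * norm w \<le> norm a * (norm (u - a) + \<rho>)"
      by (simp add: mult_left_mono)
    moreover have "- (a \<bullet> w) \<le> norm a * norm w"
      using norm_cauchy_schwarz[of "- a" w] by simp
    moreover have "t \<le> C"
      using wt(2) zero_le_power2[of "norm (w - u)"] by linarith
    ultimately show ?thesis using wt near
      unfolding lo_def by (auto simp: dist_norm norm_minus_commute)
  qed
  then have "?S \<subseteq> cball (u - a) \<rho> \<times> {lo..C}" by auto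
  then show ?thesis
    by (rule bounded_subset[OF bounded_Times[OF bounded_cball bounded_closed_interval]])
qed

section \<open>Proximal operator\<close>

text \<open>Minimise t + |w - u|^2 / 2 over the points (w, t) of the epigraph below the level of a finite
  point; this set is compact because the affine minorant bounds it from below.\<close>
lemma prox_objective_has_minimizer:
  fixes h :: "'a::euclidean_space \<Rightarrow> ereal"
  assumes proper: "proper_fun h" and closed: "closed_fun h" and convex: "convex_fun h"
  shows "\<exists>p. \<forall>w. h p + ereal ((norm (p - u))\<^sup>2 / 2) \<le> h w + ereal ((norm (w - u))\<^sup>2 / 2)"
proof -
  obtain a b where minorant: "\<And>x. ereal (a \<bullet> x - b) \<le> h x"
    using convex_fun_affine_minorant[OF assms] by blast
  obtain x0 r0 where r0: "h x0 = ereal r0"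
    using proper unfolding proper_fun_def by (metis ereal_cases)
  define C where "C = r0 + (norm (x0 - u))\<^sup>2 / 2"
  define \<psi> where "\<psi> z = snd z + (norm (fst z - u))\<^sup>2 / 2" for z :: "'a \<times> real"
  define K where "K = {(w, t). h w \<le> ereal t} \<inter> {z. \<psi> z \<le> C}"
  have "closed K"
    using closed unfolding K_def \<psi>_def closed_fun_def
    by (intro closed_Int closed_Collect_le) (auto intro!: continuous_intros)
  moreover have "bounded K"
  proof (rule bounded_subset[OF bounded_between_affine_and_paraboloid])
    show "K \<subseteq> {(w, t). a \<bullet> w - b \<le> t \<and> t + (norm (w - u))\<^sup>2 / 2 \<le> C}"
      unfolding K_def \<psi>_def using minorant order_trans by fastforce
  qed
  moreover have "(x0, r0) \<in> K" using r0 unfolding K_def \<psi>_def C_def by simp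
  ultimately obtain z where "z \<in> K" and z_min: "\<And>z'. z' \<in> K \<Longrightarrow> \<psi> z \<le> \<psi> z'"
    using continuous_attains_inf[of K \<psi>] unfolding \<psi>_def compact_eq_bounded_closed
    by (fastforce intro!: continuous_intros)
  obtain p t where z: "z = (p, t)" by (cases z)
  have lower: "ereal (\<psi> z) \<le> h w + ereal ((norm (w - u))\<^sup>2 / 2)" for w
  proof (cases "h w")
    case (real r)
    show ?thesis
    proof (cases "(w, r) \<in> K")
      case True
      then show ?thesis using z_min[of "(w, r)"] real unfolding \<psi>_def by simp
    next
      case False
      then have "C < \<psi> (w, r)" using real unfolding K_def by auto
      moreover have "\<psi> z \<le> C" using \<open>z \<in> K\<close> unfolding K_def by auto
      ultimately show ?thesis using real unfolding \<psi>_def by simp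
    qed
  qed (use proper in \<open>auto simp: proper_fun_def\<close>)
  have "h p \<le> ereal t" using \<open>z \<in> K\<close> unfolding z K_def by simp
  then have "h p + ereal ((norm (p - u))\<^sup>2 / 2) \<le> ereal (\<psi> z)"
    unfolding z \<psi>_def by (metis add_right_mono plus_ereal.simps(1) fst_conv snd_conv)
  with lower show ?thesis by (meson order_trans)
qed

lemma prox_minimal:
  fixes h :: "'a::euclidean_space \<Rightarrow> ereal"
  assumes "proper_fun h" "closed_fun h" "convex_fun h"
  shows "h (prox h u) + ereal ((norm (prox h u - u))\<^sup>2 / 2) \<le> h w + ereal ((norm (w - u))\<^sup>2 / 2)"
  using someI_ex[OF prox_objective_has_minimizer[OF assms]] unfolding prox_def by blast

lemma prox_finite:
  fixes h :: "'a::euclidean_space \<Rightarrow> ereal"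
  assumes "proper_fun h" "closed_fun h" "convex_fun h"
  shows "h (prox h u) \<noteq> \<infinity>"
proof
  assume "h (prox h u) = \<infinity>"
  moreover obtain x0 where "h x0 \<noteq> \<infinity>" using assms(1) unfolding proper_fun_def by auto
  ultimately show False using prox_minimal[OF assms, of u x0] by auto
qed

lemma norm_convex_comb_sq:
  fixes x y :: "'a::real_inner"
  shows "(norm (t *\<^sub>R x + (1 - t) *\<^sub>R y))\<^sup>2
           = t * (norm x)\<^sup>2 + (1 - t) * (norm y)\<^sup>2 - t * (1 - t) * (norm (x - y))\<^sup>2"
  unfolding power2_norm_eq_inner
  by (simp add: inner_add_left inner_add_right inner_diff_left inner_diff_right inner_commute
      algebra_simps)

text \<open>Compare p with the points t w + (1 - t) p by strong convexity and let t tend to 0.\<close>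
lemma strongly_convex_prox_ineq:
  fixes h :: "'a::real_inner \<Rightarrow> ereal"
  assumes sc: "strongly_convex_fun \<sigma> h"
    and min: "\<And>w. h p + ereal ((norm (p - u))\<^sup>2 / 2) \<le> h w + ereal ((norm (w - u))\<^sup>2 / 2)"
    and hp: "h p = ereal a" and hw: "h w = ereal b"
  shows "a + (norm (p - u))\<^sup>2 / 2 + (1 + \<sigma>) / 2 * (norm (w - p))\<^sup>2 \<le> b + (norm (w - u))\<^sup>2 / 2"
proof -
  define k where "k = (1 + \<sigma>) / 2 * (norm (w - p))\<^sup>2"
  define Pp where "Pp = a + (norm (p - u))\<^sup>2 / 2"
  define Pw where "Pw = b + (norm (w - u))\<^sup>2 / 2"
  have "Pp \<le> Pw - (1 - t) * k" if t: "0 < t" "t < 1" for t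
  proof -
    define z where "z = t *\<^sub>R w + (1 - t) *\<^sub>R p"
    have "z - u = t *\<^sub>R (w - u) + (1 - t) *\<^sub>R (p - u)" unfolding z_def by (simp add: algebra_simps)
    then have z_dist: "(norm (z - u))\<^sup>2 = t * (norm (w - u))\<^sup>2 + (1 - t) * (norm (p - u))\<^sup>2
        - t * (1 - t) * (norm (w - p))\<^sup>2"
      using norm_convex_comb_sq[of t "w - u" "p - u"] by simp
    have "ereal Pp \<le> h z + ereal ((norm (z - u))\<^sup>2 / 2)"
      using min[of z] hp unfolding Pp_def by simp
    also have "\<dots> \<le> ereal (t * b + (1 - t) * a - \<sigma> / 2 * t * (1 - t) * (norm (w - p))\<^sup>2
        + (norm (z - u))\<^sup>2 / 2)"
      using strongly_convex_funD_le[OF sc, of w b p a t] hw hp t unfolding z_def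
      by (metis add_right_mono order_refl plus_ereal.simps(1))
    also have "\<dots> = ereal (t * Pw + (1 - t) * Pp - t * (1 - t) * k)"
      unfolding z_dist Pp_def Pw_def k_def by (simp add: field_simps)
    finally have "Pp \<le> t * Pw + (1 - t) * Pp - t * (1 - t) * k" by simp
    then have "t * Pp \<le> t * (Pw - (1 - t) * k)" by (simp add: algebra_simps)
    with t show ?thesis by simp
  qed
  then have "\<forall>\<^sub>F t in at_right 0. Pp \<le> Pw - (1 - t) * k"
    unfolding eventually_at_right_field by (intro exI[of _ 1]) auto
  moreover have "((\<lambda>t. Pw - (1 - t) * k) \<longlongrightarrow> Pw - (1 - 0) * k) (at_right 0)"
    by (intro tendsto_intros)
  ultimately have "Pp \<le> Pw - k" using tendsto_lowerbound by fastforce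
  then show ?thesis unfolding Pp_def Pw_def k_def by simp
qed

lemma prox_scaled:
  fixes h :: "'a::euclidean_space \<Rightarrow> ereal"
  assumes proper: "proper_fun h" and closed: "closed_fun h" and sc: "strongly_convex_fun \<sigma> h"
    and "\<sigma> \<ge> 0" "c > 0" and p: "p = prox (\<lambda>w. ereal c * h w) u"
  shows "h p \<noteq> \<infinity>"
    and "h w \<noteq> \<infinity> \<Longrightarrow> c * real_of_ereal (h p) + (norm (p - u))\<^sup>2 / 2
           + (1 + c * \<sigma>) / 2 * (norm (w - p))\<^sup>2 \<le> c * real_of_ereal (h w) + (norm (w - u))\<^sup>2 / 2"
proof -
  have np: "\<And>x. h x \<noteq> -\<infinity>" using proper unfolding proper_fun_def by auto
  then have np': "\<And>x. ereal c * h x \<noteq> -\<infinity>" using \<open>c > 0\<close> by (simp add: ereal_mult_eq_MInfty)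
  have sc': "strongly_convex_fun (c * \<sigma>) (\<lambda>w. ereal c * h w)"
    using strongly_convex_fun_scale[OF \<open>c > 0\<close> sc np] .
  have hyps: "proper_fun (\<lambda>w. ereal c * h w)" "closed_fun (\<lambda>w. ereal c * h w)"
    "convex_fun (\<lambda>w. ereal c * h w)"
    using proper_fun_scale[OF \<open>c > 0\<close> proper] closed_fun_scale[OF \<open>c > 0\<close> closed]
      strongly_convex_imp_convex_fun[OF _ sc' np'] \<open>\<sigma> \<ge> 0\<close> \<open>c > 0\<close> by auto
  show "h p \<noteq> \<infinity>" using prox_finite[OF hyps, of u] p \<open>c > 0\<close> by auto
  then obtain a where a: "h p = ereal a" using np[of p] by (cases "h p") auto
  assume "h w \<noteq> \<infinity>"
  then obtain b where b: "h w = ereal b" using np[of w] by (cases "h w") auto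
  show "c * real_of_ereal (h p) + (norm (p - u))\<^sup>2 / 2 + (1 + c * \<sigma>) / 2 * (norm (w - p))\<^sup>2
      \<le> c * real_of_ereal (h w) + (norm (w - u))\<^sup>2 / 2"
    using strongly_convex_prox_ineq[OF sc' prox_minimal[OF hyps, of u, folded p], of "c * a" w "c * b"]
    a b by simp
qed

section \<open>Convex conjugate\<close>

lemma fenchel_young:
  "ereal (y \<bullet> x) - f x \<le> conjugate f y"
  unfolding conjugate_def by (rule SUP_upper) simp

lemma conjugate_neq_minf:
  assumes "proper_fun f"
  shows "conjugate f y \<noteq> -\<infinity>"
proof -
  obtain x r where "f x = ereal r" using assms unfolding proper_fun_def by (metis ereal_cases)
  then have "ereal (y \<bullet> x - r) \<le> conjugate f y" using fenchel_young[of y x f] by simp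
  then show ?thesis by auto
qed

lemma closed_conjugate:
  fixes f :: "'a::real_inner \<Rightarrow> ereal"
  shows "closed_fun (conjugate f)"
proof -
  have "{(y, t). conjugate f y \<le> ereal t} = (\<Inter>x. {(y, t). ereal (y \<bullet> x) - f x \<le> ereal t})"
    unfolding conjugate_def by (auto simp: SUP_le_iff)
  moreover have "closed {(y, t). ereal (y \<bullet> x) - f x \<le> ereal t}" for x
  proof (cases "f x")
    case (real r)
    have "closed {(y, t). y \<bullet> x - r \<le> t}"
      unfolding case_prod_beta by (intro closed_Collect_le) (auto intro!: continuous_intros)
    then show ?thesis using real by simp
  qed simp_all
  ultimately show ?thesis unfolding closed_fun_def by auto
qed

lemma proper_conjugate:
  fixes f :: "'a::euclidean_space \<Rightarrow> ereal"
  assumes "proper_fun f" "closed_fun f" "convex_fun f"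
  shows "proper_fun (conjugate f)"
proof -
  obtain a b where minorant: "\<And>x. ereal (a \<bullet> x - b) \<le> f x"
    using convex_fun_affine_minorant[OF assms] by blast
  have "ereal (a \<bullet> x) - f x \<le> ereal b" for x
    using minorant[of x] assms(1) by (cases "f x") (auto simp: proper_fun_def)
  then have "conjugate f a \<le> ereal b" unfolding conjugate_def by (rule SUP_least)
  then have "conjugate f a \<noteq> \<infinity>" by auto
  then show ?thesis using conjugate_neq_minf[OF assms(1)] unfolding proper_fun_def by blast
qed

lemma descent_lemma:
  fixes \<phi> :: "'a::real_inner \<Rightarrow> real"
  assumes deriv: "\<And>x. (\<phi> has_derivative (\<lambda>h. G x \<bullet> h)) (at x)"
    and lipschitz: "\<And>x y. norm (G x - G y) \<le> L * norm (x - y)"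
  shows "\<phi> (x + e) \<le> \<phi> x + G x \<bullet> e + L / 2 * (norm e)\<^sup>2"
proof -
  define \<psi> where "\<psi> s = \<phi> (x + s *\<^sub>R e) - s * (G x \<bullet> e) - L / 2 * s\<^sup>2 * (norm e)\<^sup>2" for s
  have line: "((\<lambda>s. \<phi> (x + s *\<^sub>R e)) has_real_derivative G (x + s *\<^sub>R e) \<bullet> e) (at s)" for s
  proof -
    have "((\<lambda>s. x + s *\<^sub>R e) has_derivative (\<lambda>h. h *\<^sub>R e)) (at s)"
      by (auto intro!: derivative_eq_intros)
    from has_derivative_compose[OF this deriv]
    have "((\<lambda>s. \<phi> (x + s *\<^sub>R e)) has_derivative (\<lambda>h. G (x + s *\<^sub>R e) \<bullet> (h *\<^sub>R e))) (at s)" .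
    moreover have "(\<lambda>h. G (x + s *\<^sub>R e) \<bullet> (h *\<^sub>R e)) = (*) (G (x + s *\<^sub>R e) \<bullet> e)"
      by (auto simp: fun_eq_iff)
    ultimately show ?thesis by (simp add: has_field_derivative_def)
  qed
  have deriv_\<psi>: "(\<psi> has_real_derivative G (x + s *\<^sub>R e) \<bullet> e - G x \<bullet> e - L * s * (norm e)\<^sup>2) (at s)" for s
    unfolding \<psi>_def by (rule derivative_eq_intros line | simp)+
  have slope: "G (x + s *\<^sub>R e) \<bullet> e - G x \<bullet> e \<le> L * s * (norm e)\<^sup>2" if "0 \<le> s" for s
  proof -
    have "G (x + s *\<^sub>R e) \<bullet> e - G x \<bullet> e \<le> norm (G (x + s *\<^sub>R e) - G x) * norm e"
      by (metis inner_diff_left norm_cauchy_schwarz)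
    also have "\<dots> \<le> L * norm (s *\<^sub>R e) * norm e"
      using lipschitz[of "x + s *\<^sub>R e" x] by (intro mult_right_mono) auto
    finally show ?thesis using that by (simp add: power2_eq_square mult.assoc)
  qed
  have "\<psi> 1 \<le> \<psi> 0"
  proof (rule DERIV_nonpos_imp_nonincreasing[of 0 1])
    fix s :: real assume "0 \<le> s"
    with deriv_\<psi>[of s] slope[of s]
    show "\<exists>D. (\<psi> has_real_derivative D) (at s) \<and> D \<le> 0" by (intro exI conjI) auto
  qed simp
  then show ?thesis unfolding \<psi>_def by simp
qed

text \<open>The witnesses x1, x2 average to x with weights t, 1 - t and are displaced along y1 - y2
  with the step length \<gamma> that balances the descent lemma.\<close>
lemma smooth_fun_conjugate_witnesses:
  fixes f :: "'a::real_inner \<Rightarrow> ereal"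
  assumes "\<gamma> \<ge> 0" "smooth_fun \<gamma> f" "f x = ereal r" "0 < t" "t < 1"
  shows "\<exists>x1 x2 r1 r2. f x1 = ereal r1 \<and> f x2 = ereal r2 \<and>
     (t *\<^sub>R y1 + (1 - t) *\<^sub>R y2) \<bullet> x - r + \<gamma> / 2 * t * (1 - t) * (norm (y1 - y2))\<^sup>2
       \<le> t * (y1 \<bullet> x1 - r1) + (1 - t) * (y2 \<bullet> x2 - r2)"
proof (cases "\<gamma> = 0")
  case True
  with assms(3) show ?thesis
    by (intro exI[of _ x] exI[of _ r]) (auto simp: algebra_simps inner_add_left)
next
  case False
  with assms(1) have "\<gamma> > 0" by simp
  then obtain G where deriv: "\<And>x. ((\<lambda>z. real_of_ereal (f z)) has_derivative (\<lambda>h. G x \<bullet> h)) (at x)"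
    and lipschitz: "\<And>x y. norm (G x - G y) \<le> (1 / \<gamma>) * norm (x - y)"
    and finite: "\<And>x. \<bar>f x\<bar> \<noteq> \<infinity>"
    using assms(2) unfolding smooth_fun_def by blast
  define \<phi> where "\<phi> z = real_of_ereal (f z)" for z
  have f_eq: "f z = ereal (\<phi> z)" for z using finite[of z] unfolding \<phi>_def by (cases "f z") auto
  define d where "d = y1 - y2"
  define g0 where "g0 = G x \<bullet> d"
  have descent: "\<phi> (x + (c * \<gamma>) *\<^sub>R d) \<le> \<phi> x + c * \<gamma> * g0 + \<gamma> / 2 * c\<^sup>2 * (norm d)\<^sup>2" for c
  proof -
    have "(1 / \<gamma>) / 2 * (norm ((c * \<gamma>) *\<^sub>R d))\<^sup>2 = \<gamma> / 2 * c\<^sup>2 * (norm d)\<^sup>2"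
      using \<open>\<gamma> > 0\<close> by (simp add: power_mult_distrib) (simp add: power2_eq_square)
    with descent_lemma[OF deriv lipschitz, of x "(c * \<gamma>) *\<^sub>R d"] show ?thesis
      unfolding \<phi>_def[symmetric] g0_def by simp
  qed
  define x1 where "x1 = x + ((1 - t) * \<gamma>) *\<^sub>R d"
  define x2 where "x2 = x + (- t * \<gamma>) *\<^sub>R d"
  define N where "N = (norm d)\<^sup>2"
  have bound1: "t * \<phi> x1 \<le> t * (\<phi> x + (1 - t) * \<gamma> * g0 + \<gamma> / 2 * (1 - t)\<^sup>2 * N)"
    using descent[of "1 - t"] assms(4) unfolding x1_def N_def by (intro mult_left_mono) auto
  have bound2: "(1 - t) * \<phi> x2 \<le> (1 - t) * (\<phi> x - t * \<gamma> * g0 + \<gamma> / 2 * t\<^sup>2 * N)"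
    using descent[of "- t"] assms(5) unfolding x2_def N_def by (intro mult_left_mono) auto
  have "y1 = y2 + d" unfolding d_def by simp
  then have ip1: "y1 \<bullet> x1 = y1 \<bullet> x + (1 - t) * \<gamma> * (y2 \<bullet> d + N)"
    unfolding x1_def N_def by (simp add: inner_add_left inner_add_right power2_norm_eq_inner)
  have ip2: "y2 \<bullet> x2 = y2 \<bullet> x - t * \<gamma> * (y2 \<bullet> d)"
    unfolding x2_def by (simp add: inner_diff_right)
  have ip3: "(t *\<^sub>R y1 + (1 - t) *\<^sub>R y2) \<bullet> x = t * (y1 \<bullet> x) + (1 - t) * (y2 \<bullet> x)"
    by (simp add: inner_add_left)
  have "t * (y1 \<bullet> x1 - \<phi> x1) + (1 - t) * (y2 \<bullet> x2 - \<phi> x2)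
      - ((t *\<^sub>R y1 + (1 - t) *\<^sub>R y2) \<bullet> x - \<phi> x + \<gamma> / 2 * t * (1 - t) * N)
      = (t * (\<phi> x + (1 - t) * \<gamma> * g0 + \<gamma> / 2 * (1 - t)\<^sup>2 * N) - t * \<phi> x1)
        + ((1 - t) * (\<phi> x - t * \<gamma> * g0 + \<gamma> / 2 * t\<^sup>2 * N) - (1 - t) * \<phi> x2)"
    unfolding ip1 ip2 ip3 by (simp add: field_simps power2_eq_square)
  with bound1 bound2 have "(t *\<^sub>R y1 + (1 - t) *\<^sub>R y2) \<bullet> x - \<phi> x + \<gamma> / 2 * t * (1 - t) * N
      \<le> t * (y1 \<bullet> x1 - \<phi> x1) + (1 - t) * (y2 \<bullet> x2 - \<phi> x2)"
    by linarith
  then show ?thesis using f_eq assms(3) unfolding N_def d_def by (metis ereal.inject)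
qed

lemma strongly_convex_conjugate:
  fixes f :: "'a::real_inner \<Rightarrow> ereal"
  assumes "proper_fun f" "\<gamma> \<ge> 0" "smooth_fun \<gamma> f"
  shows "strongly_convex_fun \<gamma> (conjugate f)"
  unfolding strongly_convex_fun_def
proof (intro allI impI)
  fix y1 y2 :: 'a and t :: real assume t: "0 < t \<and> t < 1"
  let ?m = "ereal (\<gamma> / 2 * t * (1 - t) * (norm (y1 - y2))\<^sup>2)"
  show "conjugate f (t *\<^sub>R y1 + (1 - t) *\<^sub>R y2)
        \<le> ereal t * conjugate f y1 + ereal (1 - t) * conjugate f y2 - ?m"
    unfolding conjugate_def[of f "t *\<^sub>R y1 + (1 - t) *\<^sub>R y2"]
  proof (rule SUP_least)
    fix x
    show "ereal ((t *\<^sub>R y1 + (1 - t) *\<^sub>R y2) \<bullet> x) - f x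
          \<le> ereal t * conjugate f y1 + ereal (1 - t) * conjugate f y2 - ?m"
    proof (cases "f x")
      case (real r)
      then obtain x1 x2 r1 r2 where "f x1 = ereal r1" "f x2 = ereal r2" and
        witness: "(t *\<^sub>R y1 + (1 - t) *\<^sub>R y2) \<bullet> x - r + \<gamma> / 2 * t * (1 - t) * (norm (y1 - y2))\<^sup>2
          \<le> t * (y1 \<bullet> x1 - r1) + (1 - t) * (y2 \<bullet> x2 - r2)"
        using smooth_fun_conjugate_witnesses[OF assms(2,3)] t by blast
      then have "ereal (y1 \<bullet> x1 - r1) \<le> conjugate f y1" "ereal (y2 \<bullet> x2 - r2) \<le> conjugate f y2"
        using fenchel_young[of y1 x1 f] fenchel_young[of y2 x2 f] by auto
      then have "ereal t * ereal (y1 \<bullet> x1 - r1) + ereal (1 - t) * ereal (y2 \<bullet> x2 - r2) - ?m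
          \<le> ereal t * conjugate f y1 + ereal (1 - t) * conjugate f y2 - ?m"
        using t by (intro ereal_minus_mono ereal_convex_comb_mono) auto
      moreover have "ereal ((t *\<^sub>R y1 + (1 - t) *\<^sub>R y2) \<bullet> x) - f x
          \<le> ereal t * ereal (y1 \<bullet> x1 - r1) + ereal (1 - t) * ereal (y2 \<bullet> x2 - r2) - ?m"
        using witness real by simp
      ultimately show ?thesis by (rule order_trans[rotated])
    qed (use assms(1) in \<open>auto simp: proper_fun_def\<close>)
  qed
qed

lemma convex_fun_weighted_mean_le:
  fixes h :: "'a::real_vector \<Rightarrow> ereal"
  assumes convex: "convex_fun h" and np: "\<And>x. h x \<noteq> -\<infinity>"
    and I: "finite I" "I \<noteq> {}" and a: "\<And>i. i \<in> I \<Longrightarrow> a i > 0"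
    and hp: "\<And>i. i \<in> I \<Longrightarrow> h (p i) \<le> ereal (r i)"
  shows "h ((1 / (\<Sum>i\<in>I. a i)) *\<^sub>R (\<Sum>i\<in>I. a i *\<^sub>R p i))
           \<le> ereal ((\<Sum>i\<in>I. a i * r i) / (\<Sum>i\<in>I. a i))"
proof -
  define D where "D = {x. h x \<noteq> \<infinity>}"
  define \<phi> where "\<phi> x = real_of_ereal (h x)" for x
  have h_eq: "h x = ereal (\<phi> x)" if "x \<in> D" for x
    using that np[of x] unfolding D_def \<phi>_def by (cases "h x") auto
  have comb: "h (t *\<^sub>R x + (1 - t) *\<^sub>R y) \<le> ereal (t * \<phi> x + (1 - t) * \<phi> y)"
    if "x \<in> D" "y \<in> D" "0 < t" "t < 1" for x y and t :: real
    using convex_funD_le[OF convex, of x "\<phi> x" y "\<phi> y" t] h_eq that by simp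
  have "convex D"
  proof (rule convexI)
    fix x y and s r :: real assume "x \<in> D" "y \<in> D" "0 \<le> s" "0 \<le> r" "s + r = 1"
    then show "s *\<^sub>R x + r *\<^sub>R y \<in> D"
      using comb[of x y s] unfolding D_def
      by (cases "s = 0 \<or> r = 0") (auto simp: eq_diff_eq[symmetric])
  qed
  have "convex_on D \<phi>"
  proof (rule convex_onI[OF _ \<open>convex D\<close>])
    fix t :: real and x y assume "0 < t" "t < 1" "x \<in> D" "y \<in> D"
    then have "h ((1 - t) *\<^sub>R x + t *\<^sub>R y) \<le> ereal ((1 - t) * \<phi> x + t * \<phi> y)"
      using comb[of y x t] by (simp add: add.commute)
    then show "\<phi> ((1 - t) *\<^sub>R x + t *\<^sub>R y) \<le> (1 - t) * \<phi> x + t * \<phi> y"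
      using np[of "(1 - t) *\<^sub>R x + t *\<^sub>R y"] unfolding \<phi>_def
      by (cases "h ((1 - t) *\<^sub>R x + t *\<^sub>R y)") auto
  qed
  define W where "W = (\<Sum>i\<in>I. a i)"
  have "W > 0" unfolding W_def using I a by (intro sum_pos) auto
  have weights: "(\<Sum>i\<in>I. a i / W) = 1" "\<And>i. i \<in> I \<Longrightarrow> 0 \<le> a i / W"
    using \<open>W > 0\<close> a unfolding W_def by (auto simp: sum_divide_distrib[symmetric] less_imp_le)
  have pD: "p i \<in> D" if "i \<in> I" for i using hp[OF that] unfolding D_def by auto
  have mean: "(1 / W) *\<^sub>R (\<Sum>i\<in>I. a i *\<^sub>R p i) = (\<Sum>i\<in>I. (a i / W) *\<^sub>R p i)"
    by (simp add: scaleR_sum_right)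
  have mean_D: "(\<Sum>i\<in>I. (a i / W) *\<^sub>R p i) \<in> D"
    using convex_sum[OF I(1) \<open>convex D\<close> weights] pD by blast
  have "\<phi> (\<Sum>i\<in>I. (a i / W) *\<^sub>R p i) \<le> (\<Sum>i\<in>I. (a i / W) * \<phi> (p i))"
    using convex_on_sum[OF I \<open>convex_on D \<phi>\<close> weights] pD by blast
  also have "\<dots> \<le> (\<Sum>i\<in>I. (a i / W) * r i)"
    using hp h_eq pD weights(2) by (intro sum_mono mult_left_mono) auto
  also have "\<dots> = (\<Sum>i\<in>I. a i * r i) / W" by (simp add: sum_divide_distrib)
  finally show ?thesis using h_eq[OF mean_D] unfolding W_def[symmetric] mean by simp
qed

section \<open>One step of the primal-dual method\<close>

lemma norm_diff_shift_sq:
  fixes w z q :: "'a::real_inner"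
  shows "(norm (w - (z - q)))\<^sup>2 = (norm (w - z))\<^sup>2 + 2 * (q \<bullet> (w - z)) + (norm q)\<^sup>2"
  unfolding power2_norm_eq_inner
  by (simp add: inner_add_left inner_add_right inner_diff_left inner_diff_right inner_commute)

lemma prox_ineq_linearize:
  fixes p w z q :: "'a::real_inner"
  assumes "\<eta> > 0"
    and "\<eta> * a + (norm (p - (z - \<eta> *\<^sub>R q)))\<^sup>2 / 2 + \<kappa> / 2 * (norm (w - p))\<^sup>2
           \<le> \<eta> * b + (norm (w - (z - \<eta> *\<^sub>R q)))\<^sup>2 / 2"
  shows "a - b + q \<bullet> (p - w)
           \<le> ((norm (w - z))\<^sup>2 - (norm (p - z))\<^sup>2 - \<kappa> * (norm (w - p))\<^sup>2) / (2 * \<eta>)"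
proof -
  have "\<eta> * (a - b + q \<bullet> (p - w))
      \<le> ((norm (w - z))\<^sup>2 - (norm (p - z))\<^sup>2 - \<kappa> * (norm (w - p))\<^sup>2) / 2"
    using assms(2) unfolding norm_diff_shift_sq by (simp add: inner_diff_right field_simps)
  with assms(1) show ?thesis by (simp add: field_simps)
qed

lemma product_le_weighted_squares:
  fixes a e R \<eta> \<tau> :: real
  assumes "\<eta> > 0" "\<tau> > 0" "\<eta> * \<tau> * R\<^sup>2 \<le> 1" "a \<ge> 0" "e \<ge> 0"
  shows "R * a * e \<le> a\<^sup>2 / (2 * \<tau>) + e\<^sup>2 / (2 * \<eta>)"
proof -
  have "a\<^sup>2 / (2 * \<tau>) + e\<^sup>2 / (2 * \<eta>) - R * a * e
      = (\<eta> * (a - \<tau> * R * e)\<^sup>2 + \<tau> * e\<^sup>2 * (1 - \<eta> * \<tau> * R\<^sup>2)) / (2 * \<tau> * \<eta>)"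
    using assms by (simp add: field_simps power2_eq_square)
  moreover have "\<dots> \<ge> 0"
    using assms by (intro divide_nonneg_pos add_nonneg_nonneg mult_nonneg_nonneg) auto
  ultimately show ?thesis by linarith
qed

lemma transpose_mult_vec_inner:
  fixes A :: "real^'d^'n"
  shows "(transpose A *v y) \<bullet> w = y \<bullet> (A *v w)"
  by (metis dot_lmul_matrix vector_transpose_matrix transpose_transpose)

lemma inner_matrix_le_weighted_squares:
  fixes A :: "real^'d^'n"
  assumes "\<eta> > 0" "\<tau> > 0" "\<eta> * \<tau> * (onorm (\<lambda>z. A *v z))\<^sup>2 \<le> 1"
  shows "z \<bullet> (A *v e) \<le> (norm z)\<^sup>2 / (2 * \<tau>) + (norm e)\<^sup>2 / (2 * \<eta>)"
proof -
  have "z \<bullet> (A *v e) \<le> norm z * norm (A *v e)"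
    by (rule norm_cauchy_schwarz)
  also have "\<dots> \<le> norm z * (onorm (\<lambda>z. A *v z) * norm e)"
    using onorm[OF matrix_vector_mul_bounded_linear, of A e] by (intro mult_left_mono) simp_all
  also have "\<dots> \<le> (norm z)\<^sup>2 / (2 * \<tau>) + (norm e)\<^sup>2 / (2 * \<eta>)"
    using product_le_weighted_squares[OF assms, of "norm z" "norm e"] by (simp add: ac_simps)
  finally show ?thesis .
qed

lemma primal_dual_step_bound:
  fixes A :: "real^'d^'n" and xt p w :: "real^'d" and yt y1 v :: "real^'n"
  assumes "\<eta> > 0" "\<tau> > 0" "\<mu> \<ge> 0" and coupling: "\<eta> * \<tau> * (onorm (\<lambda>z. A *v z))\<^sup>2 \<le> 1"
    and primal: "\<eta> * Gp + (norm (p - (xt - \<eta> *\<^sub>R (transpose A *v yt))))\<^sup>2 / 2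
        + (1 + \<eta> * \<mu>) / 2 * (norm (w - p))\<^sup>2
      \<le> \<eta> * Gw + (norm (w - (xt - \<eta> *\<^sub>R (transpose A *v yt))))\<^sup>2 / 2"
    and dual: "\<tau> * Hy + (norm (y1 - (yt + \<tau> *\<^sub>R (A *v p))))\<^sup>2 / 2
        + (1 + \<tau> * \<gamma>) / 2 * (norm (v - y1))\<^sup>2
      \<le> \<tau> * Hv + (norm (v - (yt + \<tau> *\<^sub>R (A *v p))))\<^sup>2 / 2"
  shows "(Gp + y1 \<bullet> (A *v p)) - (Gw + y1 \<bullet> (A *v w)) + (Hy - Hv - (y1 - v) \<bullet> (A *v p))
      \<le> (norm (w - xt))\<^sup>2 / (2 * \<eta>) + (norm (v - yt))\<^sup>2 / (2 * \<tau>)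
        - (1 + \<tau> * \<gamma>) / (2 * \<tau>) * (norm (v - y1))\<^sup>2"
proof -
  have "Gp - Gw + yt \<bullet> (A *v (p - w))
      \<le> ((norm (w - xt))\<^sup>2 - (norm (p - xt))\<^sup>2 - (1 + \<eta> * \<mu>) * (norm (w - p))\<^sup>2) / (2 * \<eta>)"
    using prox_ineq_linearize[OF \<open>\<eta> > 0\<close> primal] unfolding transpose_mult_vec_inner
    by (simp add: matrix_vector_mult_diff_distrib inner_diff_right)
  also have "\<dots> \<le> ((norm (w - xt))\<^sup>2 - (norm (w - p))\<^sup>2) / (2 * \<eta>)"
  proof (rule divide_right_mono)
    have "0 \<le> \<eta> * \<mu> * (norm (w - p))\<^sup>2" using assms(1,3) by simp
    then show "(norm (w - xt))\<^sup>2 - (norm (p - xt))\<^sup>2 - (1 + \<eta> * \<mu>) * (norm (w - p))\<^sup>2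
        \<le> (norm (w - xt))\<^sup>2 - (norm (w - p))\<^sup>2"
      using zero_le_power2[of "norm (p - xt)"] unfolding distrib_right by linarith
  qed (use assms(1) in simp)
  finally have primal_lin: "Gp - Gw + yt \<bullet> (A *v (p - w))
      \<le> ((norm (w - xt))\<^sup>2 - (norm (w - p))\<^sup>2) / (2 * \<eta>)" .
  have "yt + \<tau> *\<^sub>R (A *v p) = yt - \<tau> *\<^sub>R (- (A *v p))" by simp
  with dual have "\<tau> * Hy + (norm (y1 - (yt - \<tau> *\<^sub>R (- (A *v p)))))\<^sup>2 / 2
        + (1 + \<tau> * \<gamma>) / 2 * (norm (v - y1))\<^sup>2
      \<le> \<tau> * Hv + (norm (v - (yt - \<tau> *\<^sub>R (- (A *v p)))))\<^sup>2 / 2"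
    by metis
  from prox_ineq_linearize[OF \<open>\<tau> > 0\<close> this]
  have dual_lin: "Hy - Hv - (A *v p) \<bullet> (y1 - v)
      \<le> ((norm (v - yt))\<^sup>2 - (norm (y1 - yt))\<^sup>2 - (1 + \<tau> * \<gamma>) * (norm (v - y1))\<^sup>2) / (2 * \<tau>)"
    by simp
  have coupling_term: "(y1 - yt) \<bullet> (A *v (p - w))
      \<le> (norm (y1 - yt))\<^sup>2 / (2 * \<tau>) + (norm (w - p))\<^sup>2 / (2 * \<eta>)"
    using inner_matrix_le_weighted_squares[OF assms(1,2) coupling] by (simp add: norm_minus_commute)
  have "(Gp + y1 \<bullet> (A *v p)) - (Gw + y1 \<bullet> (A *v w)) + (Hy - Hv - (y1 - v) \<bullet> (A *v p))
      = (Gp - Gw + yt \<bullet> (A *v (p - w))) + (Hy - Hv - (A *v p) \<bullet> (y1 - v))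
        + (y1 - yt) \<bullet> (A *v (p - w))"
    by (simp add: matrix_vector_mult_diff_distrib inner_diff_left inner_diff_right inner_commute)
  also have "\<dots> \<le> (norm (w - xt))\<^sup>2 / (2 * \<eta>) + (norm (v - yt))\<^sup>2 / (2 * \<tau>)
        - (1 + \<tau> * \<gamma>) / (2 * \<tau>) * (norm (v - y1))\<^sup>2"
    using primal_lin dual_lin coupling_term unfolding diff_divide_distrib times_divide_eq_left[symmetric]
    by linarith
  finally show ?thesis .
qed

lemma be_the_leader_le:
  fixes loss :: "nat \<Rightarrow> 'a \<Rightarrow> real" and r :: "'a \<Rightarrow> real" and \<delta> :: "nat \<Rightarrow> 'a \<Rightarrow> real"
  assumes leader: "\<And>t w. w \<in> D \<Longrightarrow> (\<Sum>k<t. loss k (x t)) + r (x t) + \<delta> t w \<le> (\<Sum>k<t. loss k w) + r w"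
    and iterates: "\<And>t. x (Suc t) \<in> D" and "u \<in> D" "\<delta> T u \<ge> 0"
  shows "(\<Sum>t<T. loss t (x (Suc t)) + \<delta> t (x (Suc t))) \<le> (\<Sum>t<T. loss t u) + r u - r (x 0)"
proof -
  have partial: "(\<Sum>t<n. loss t (x (Suc t)) + \<delta> t (x (Suc t)))
      \<le> (\<Sum>t<n. loss t (x n)) + r (x n) - r (x 0)" for n
  proof (induction n)
    case (Suc n)
    with leader[OF iterates[of n], of n] show ?case by simp
  qed simp
  from leader[OF \<open>u \<in> D\<close>, of T] \<open>\<delta> T u \<ge> 0\<close> show ?thesis
    using partial[of T] by linarith
qed

section \<open>The DAPD iteration\<close>

locale dapd_iteration =
  fixes A :: "real^'d^'n" and f :: "real^'n \<Rightarrow> ereal" and g :: "real^'d \<Rightarrow> ereal"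
    and \<gamma> \<mu> :: real and \<beta> \<eta> \<tau> :: "nat \<Rightarrow> real"
    and x xbar :: "nat \<Rightarrow> real^'d" and y :: "nat \<Rightarrow> real^'n"
  assumes f_proper: "proper_fun f" and f_closed: "closed_fun f" and f_convex: "convex_fun f"
    and g_proper: "proper_fun g" and g_closed: "closed_fun g" and g_convex: "convex_fun g"
    and \<gamma>_nonneg: "\<gamma> \<ge> 0" and f_smooth: "smooth_fun \<gamma> f"
    and \<mu>_nonneg: "\<mu> \<ge> 0" and g_strong: "strongly_convex_fun \<mu> g"
    and \<beta>_pos: "\<And>t. \<beta> t > 0" and \<eta>_pos: "\<And>t. \<eta> t > 0" and \<tau>_pos: "\<And>t. \<tau> t > 0"
    and xbar_step: "\<And>t. xbar (Suc t) =
          prox (\<lambda>w. ereal (\<eta> t) * g w) (x t - \<eta> t *\<^sub>R (transpose A *v y t))"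
    and y_step: "\<And>t. y (Suc t) =
          prox (\<lambda>w. ereal (\<tau> t) * conjugate f w) (y t + \<tau> t *\<^sub>R (A *v xbar (Suc t)))"
    and x_step: "\<And>t. x (Suc t) =
          prox (\<lambda>w. ereal (\<Sum>k\<le>t. \<beta> k) * g w)
               (x 0 - (\<Sum>k\<le>t. \<beta> k *\<^sub>R (transpose A *v y (Suc k))))"
begin

text \<open>Since real_of_ereal maps \<infinity> to 0, G and H carry information only where g and the
  conjugate of f are finite.\<close>

definition G :: "real^'d \<Rightarrow> real" where "G w = real_of_ereal (g w)"

definition H :: "real^'n \<Rightarrow> real" where "H z = real_of_ereal (conjugate f z)"

definition lagrangian :: "real^'d \<Rightarrow> real^'n \<Rightarrow> real" where
  "lagrangian w z = G w + z \<bullet> (A *v w) - H z"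

lemma g_neq_minf: "g w \<noteq> -\<infinity>"
  using g_proper unfolding proper_fun_def by auto

lemma conjugate_f_neq_minf: "conjugate f z \<noteq> -\<infinity>"
  using conjugate_neq_minf[OF f_proper] .

lemma g_eq_G: "g w \<noteq> \<infinity> \<Longrightarrow> g w = ereal (G w)"
  using g_neq_minf[of w] unfolding G_def by (cases "g w") auto

lemma conjugate_f_eq_H: "conjugate f z \<noteq> \<infinity> \<Longrightarrow> conjugate f z = ereal (H z)"
  using conjugate_f_neq_minf[of z] unfolding H_def by (cases "conjugate f z") auto

lemma conjugate_f_strong: "strongly_convex_fun \<gamma> (conjugate f)"
  using strongly_convex_conjugate[OF f_proper \<gamma>_nonneg f_smooth] .

lemma conjugate_f_convex: "convex_fun (conjugate f)"
  using strongly_convex_imp_convex_fun[OF \<gamma>_nonneg conjugate_f_strong conjugate_f_neq_minf] .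

lemma cumulative_weight_pos: "(\<Sum>k\<le>t. \<beta> k) > 0"
  using \<beta>_pos by (intro sum_pos) auto

lemmas xbar_prox = prox_scaled[OF g_proper g_closed g_strong \<mu>_nonneg \<eta>_pos xbar_step]
lemmas y_prox = prox_scaled[OF proper_conjugate[OF f_proper f_closed f_convex] closed_conjugate
    conjugate_f_strong \<gamma>_nonneg \<tau>_pos y_step]
lemmas x_prox = prox_scaled[OF g_proper g_closed g_strong \<mu>_nonneg cumulative_weight_pos x_step]

lemma x_regularized_leader:
  assumes "g w \<noteq> \<infinity>"
  shows "(\<Sum>k<t. \<beta> k * (G (x t) + y (Suc k) \<bullet> (A *v x t))) + (norm (x t - x 0))\<^sup>2 / 2
      + (1 + (\<Sum>k<t. \<beta> k) * \<mu>) / 2 * (norm (w - x t))\<^sup>2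
    \<le> (\<Sum>k<t. \<beta> k * (G w + y (Suc k) \<bullet> (A *v w))) + (norm (w - x 0))\<^sup>2 / 2"
proof (cases t)
  case (Suc s)
  define S where "S = (\<Sum>k\<le>s. \<beta> k *\<^sub>R (transpose A *v y (Suc k)))"
  have weight: "(\<Sum>k<t. \<beta> k) = (\<Sum>k\<le>s. \<beta> k)"
    unfolding Suc lessThan_Suc_atMost ..
  have linear: "(\<Sum>k<t. \<beta> k * (G z + y (Suc k) \<bullet> (A *v z))) = (\<Sum>k\<le>s. \<beta> k) * G z + S \<bullet> z" for z
    unfolding S_def Suc lessThan_Suc_atMost
    by (simp add: distrib_left sum.distrib sum_distrib_right inner_sum_left dot_lmul_matrix)
  show ?thesis
    using x_prox(2)[OF assms, of s] unfolding G_def[symmetric] S_def[symmetric]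
      linear weight norm_diff_shift_sq unfolding Suc
    by (simp add: inner_diff_right field_simps)
qed simp

lemma step_gap_bound:
  assumes step1: "\<eta> t * (1 + (\<Sum>k<t. \<beta> k) * \<mu>) \<ge> \<beta> t"
    and step2: "\<eta> t * \<tau> t * (onorm (\<lambda>z. A *v z))\<^sup>2 \<le> 1"
    and step3: "\<beta> (Suc t) / \<tau> (Suc t) \<le> \<beta> t / \<tau> t * (1 + \<gamma> * \<tau> t)"
    and v: "conjugate f v \<noteq> \<infinity>"
  shows "\<beta> t * ((G (xbar (Suc t)) + y (Suc t) \<bullet> (A *v xbar (Suc t)))
            - (G (x (Suc t)) + y (Suc t) \<bullet> (A *v x (Suc t))))
        - (1 + (\<Sum>k<t. \<beta> k) * \<mu>) / 2 * (norm (x (Suc t) - x t))\<^sup>2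
        + \<beta> t * (H (y (Suc t)) - H v - (y (Suc t) - v) \<bullet> (A *v xbar (Suc t)))
      \<le> \<beta> t / (2 * \<tau> t) * (norm (v - y t))\<^sup>2
        - \<beta> (Suc t) / (2 * \<tau> (Suc t)) * (norm (v - y (Suc t)))\<^sup>2"
proof -
  define B where "B = (\<Sum>k<t. \<beta> k)"
  define N1 where "N1 = (norm (x (Suc t) - x t))\<^sup>2"
  define N2 where "N2 = (norm (v - y t))\<^sup>2"
  define N3 where "N3 = (norm (v - y (Suc t)))\<^sup>2"
  define gap where "gap = (G (xbar (Suc t)) + y (Suc t) \<bullet> (A *v xbar (Suc t)))
      - (G (x (Suc t)) + y (Suc t) \<bullet> (A *v x (Suc t)))
      + (H (y (Suc t)) - H v - (y (Suc t) - v) \<bullet> (A *v xbar (Suc t)))"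
  have "gap \<le> N1 / (2 * \<eta> t) + N2 / (2 * \<tau> t) - (1 + \<tau> t * \<gamma>) / (2 * \<tau> t) * N3"
    unfolding gap_def N1_def N2_def N3_def
    by (rule primal_dual_step_bound[OF \<eta>_pos \<tau>_pos \<mu>_nonneg step2
          xbar_prox(2)[OF x_prox(1), unfolded G_def[symmetric]]
          y_prox(2)[OF v, unfolded H_def[symmetric]]])
  then have "\<beta> t * gap \<le> \<beta> t * (N1 / (2 * \<eta> t) + N2 / (2 * \<tau> t) - (1 + \<tau> t * \<gamma>) / (2 * \<tau> t) * N3)"
    using \<beta>_pos by (intro mult_left_mono) (auto simp: less_imp_le)
  also have "\<dots> = \<beta> t / \<eta> t * N1 / 2 + \<beta> t / (2 * \<tau> t) * N2 - \<beta> t / \<tau> t * (1 + \<gamma> * \<tau> t) * N3 / 2"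
    using \<eta>_pos[of t] \<tau>_pos[of t] by (simp add: field_simps)
  also have "\<dots> \<le> (1 + B * \<mu>) * N1 / 2 + \<beta> t / (2 * \<tau> t) * N2 - \<beta> (Suc t) / \<tau> (Suc t) * N3 / 2"
  proof -
    have "\<beta> t / \<eta> t \<le> 1 + B * \<mu>"
      using step1 \<eta>_pos[of t] unfolding B_def by (simp add: divide_le_eq mult.commute)
    then have "\<beta> t / \<eta> t * N1 \<le> (1 + B * \<mu>) * N1" unfolding N1_def by (rule mult_right_mono) simp
    moreover have "\<beta> (Suc t) / \<tau> (Suc t) * N3 \<le> \<beta> t / \<tau> t * (1 + \<gamma> * \<tau> t) * N3"
      using step3 unfolding N3_def by (rule mult_right_mono) simp
    ultimately show ?thesis by (intro diff_mono add_mono divide_right_mono) auto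
  qed
  finally show ?thesis unfolding gap_def B_def N1_def N2_def N3_def by (simp add: algebra_simps)
qed

lemma weighted_gap_sum_le:
  assumes step1: "\<And>t. t < T \<Longrightarrow> \<eta> t * (1 + (\<Sum>k<t. \<beta> k) * \<mu>) \<ge> \<beta> t"
    and step2: "\<And>t. t < T \<Longrightarrow> \<eta> t * \<tau> t * (onorm (\<lambda>z. A *v z))\<^sup>2 \<le> 1"
    and step3: "\<And>t. t < T \<Longrightarrow> \<beta> (Suc t) / \<tau> (Suc t) \<le> \<beta> t / \<tau> t * (1 + \<gamma> * \<tau> t)"
    and u: "g u \<noteq> \<infinity>" and v: "conjugate f v \<noteq> \<infinity>"
  shows "(\<Sum>t<T. \<beta> t * (lagrangian (xbar (Suc t)) v - lagrangian u (y (Suc t))))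
      \<le> \<beta> 0 / (2 * \<tau> 0) * (norm (y 0 - v))\<^sup>2 + 1 / 2 * (norm (x 0 - u))\<^sup>2"
proof -
  define loss where "loss t w = \<beta> t * (G w + y (Suc t) \<bullet> (A *v w))" for t w
  define \<delta> where "\<delta> t w = (1 + (\<Sum>k<t. \<beta> k) * \<mu>) / 2 * (norm (w - x t))\<^sup>2" for t w
  define \<phi> where "\<phi> t = \<beta> t / (2 * \<tau> t) * (norm (v - y t))\<^sup>2" for t
  define step_gap where "step_gap t = \<beta> t * (lagrangian (xbar (Suc t)) v - lagrangian u (y (Suc t)))
      - (loss t (x (Suc t)) + \<delta> t (x (Suc t))) + loss t u" for t
  have "(\<Sum>t<T. loss t (x (Suc t)) + \<delta> t (x (Suc t)))
      \<le> (\<Sum>t<T. loss t u) + (norm (u - x 0))\<^sup>2 / 2 - (norm (x 0 - x 0))\<^sup>2 / 2"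
  proof (rule be_the_leader_le[where D = "{w. g w \<noteq> \<infinity>}"])
    show "\<And>t w. w \<in> {w. g w \<noteq> \<infinity>} \<Longrightarrow> (\<Sum>k<t. loss k (x t)) + (norm (x t - x 0))\<^sup>2 / 2 + \<delta> t w
        \<le> (\<Sum>k<t. loss k w) + (norm (w - x 0))\<^sup>2 / 2"
      unfolding loss_def \<delta>_def using x_regularized_leader by simp
    show "0 \<le> \<delta> T u" unfolding \<delta>_def using \<beta>_pos \<mu>_nonneg by (simp add: sum_nonneg less_imp_le)
  qed (use u x_prox(1) in auto)
  moreover have "step_gap t \<le> \<phi> t - \<phi> (Suc t)" if "t < T" for t
    using step_gap_bound[OF step1 step2 step3 v, OF that that that]
    unfolding step_gap_def \<phi>_def loss_def \<delta>_def lagrangian_def by (simp add: algebra_simps)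
  then have "(\<Sum>t<T. step_gap t) \<le> \<phi> 0 - \<phi> T"
    using sum_mono[of "{..<T}" step_gap "\<lambda>t. \<phi> t - \<phi> (Suc t)"] sum_lessThan_telescope'[of \<phi> T]
    by simp
  moreover have "\<phi> T \<ge> 0" unfolding \<phi>_def using \<beta>_pos[of T] \<tau>_pos[of T] by simp
  moreover have "(\<Sum>t<T. \<beta> t * (lagrangian (xbar (Suc t)) v - lagrangian u (y (Suc t))))
      = (\<Sum>t<T. step_gap t) + (\<Sum>t<T. loss t (x (Suc t)) + \<delta> t (x (Suc t))) - (\<Sum>t<T. loss t u)"
    unfolding step_gap_def by (simp add: sum.distrib sum_subtractf)
  ultimately show ?thesis unfolding \<phi>_def by (simp add: norm_minus_commute)
qed

definition x_mean :: "nat \<Rightarrow> real^'d" where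
  "x_mean T = (1 / (\<Sum>t<T. \<beta> t)) *\<^sub>R (\<Sum>t<T. \<beta> t *\<^sub>R xbar (Suc t))"

definition y_mean :: "nat \<Rightarrow> real^'n" where
  "y_mean T = (1 / (\<Sum>t<T. \<beta> t)) *\<^sub>R (\<Sum>t<T. \<beta> t *\<^sub>R y (Suc t))"

lemma mean_iterates_bounds:
  assumes "T \<ge> 1"
  shows "g (x_mean T) = ereal (G (x_mean T))"
    and "G (x_mean T) \<le> (\<Sum>t<T. \<beta> t * G (xbar (Suc t))) / (\<Sum>t<T. \<beta> t)"
    and "conjugate f (y_mean T) = ereal (H (y_mean T))"
    and "H (y_mean T) \<le> (\<Sum>t<T. \<beta> t * H (y (Suc t))) / (\<Sum>t<T. \<beta> t)"
proof -
  have I: "finite {..<T}" "{..<T} \<noteq> {}" using assms by (auto simp: lessThan_empty_iff)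
  have g_le: "g (x_mean T) \<le> ereal ((\<Sum>t<T. \<beta> t * G (xbar (Suc t))) / (\<Sum>t<T. \<beta> t))"
    unfolding x_mean_def using g_eq_G[OF xbar_prox(1)] \<beta>_pos
    by (intro convex_fun_weighted_mean_le[OF g_convex g_neq_minf I]) auto
  then show g_eq: "g (x_mean T) = ereal (G (x_mean T))" by (intro g_eq_G) auto
  with g_le show "G (x_mean T) \<le> (\<Sum>t<T. \<beta> t * G (xbar (Suc t))) / (\<Sum>t<T. \<beta> t)" by simp
  have h_le: "conjugate f (y_mean T) \<le> ereal ((\<Sum>t<T. \<beta> t * H (y (Suc t))) / (\<Sum>t<T. \<beta> t))"
    unfolding y_mean_def using conjugate_f_eq_H[OF y_prox(1)] \<beta>_pos
    by (intro convex_fun_weighted_mean_le[OF conjugate_f_convex conjugate_f_neq_minf I]) auto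
  then show h_eq: "conjugate f (y_mean T) = ereal (H (y_mean T))" by (intro conjugate_f_eq_H) auto
  with h_le show "H (y_mean T) \<le> (\<Sum>t<T. \<beta> t * H (y (Suc t))) / (\<Sum>t<T. \<beta> t)" by simp
qed

lemma lagrangian_gap_of_means_le:
  assumes "T \<ge> 1"
  shows "lagrangian (x_mean T) v - lagrangian u (y_mean T)
    \<le> (\<Sum>t<T. \<beta> t * (lagrangian (xbar (Suc t)) v - lagrangian u (y (Suc t)))) / (\<Sum>t<T. \<beta> t)"
proof -
  define W where "W = (\<Sum>t<T. \<beta> t)"
  have "W > 0" unfolding W_def using assms \<beta>_pos by (intro sum_pos) (auto simp: lessThan_empty_iff)
  have "v \<bullet> (A *v x_mean T) = (\<Sum>t<T. \<beta> t * (v \<bullet> (A *v xbar (Suc t)))) / W"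
    unfolding x_mean_def W_def[symmetric]
    by (simp add: transpose_mult_vec_inner[symmetric] inner_sum_right sum_divide_distrib)
  moreover have "y_mean T \<bullet> (A *v u) = (\<Sum>t<T. \<beta> t * (y (Suc t) \<bullet> (A *v u))) / W"
    unfolding y_mean_def W_def[symmetric] by (simp add: inner_sum_left sum_divide_distrib)
  moreover have "(\<Sum>t<T. \<beta> t * (lagrangian (xbar (Suc t)) v - lagrangian u (y (Suc t)))) / W
      = (\<Sum>t<T. \<beta> t * G (xbar (Suc t))) / W + (\<Sum>t<T. \<beta> t * (v \<bullet> (A *v xbar (Suc t)))) / W
        - H v - G u - (\<Sum>t<T. \<beta> t * (y (Suc t) \<bullet> (A *v u))) / W + (\<Sum>t<T. \<beta> t * H (y (Suc t))) / W"
    using \<open>W > 0\<close> unfolding lagrangian_def W_def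
    by (simp add: sum.distrib sum_subtractf algebra_simps sum_distrib_right[symmetric] field_simps)
  ultimately show ?thesis
    using mean_iterates_bounds[OF assms] unfolding lagrangian_def W_def by linarith
qed

lemma saddleF_eq_lagrangian:
  assumes "g w \<noteq> \<infinity>" "conjugate f z \<noteq> \<infinity>"
  shows "saddleF g f A w z = ereal (lagrangian w z)"
  unfolding saddleF_def lagrangian_def g_eq_G[OF assms(1)] conjugate_f_eq_H[OF assms(2)] by simp

lemma saddle_gap_of_means_minf:
  assumes "T \<ge> 1" "g u = \<infinity> \<or> conjugate f v = \<infinity>"
  shows "saddleF g f A (x_mean T) v - saddleF g f A u (y_mean T) = -\<infinity>"
  using assms(2) g_neq_minf[of u] conjugate_f_neq_minf[of v]
  unfolding saddleF_def mean_iterates_bounds(1,3)[OF assms(1)]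
  by (cases "g u"; cases "conjugate f v") auto

end

theorem theorem2p3:
  fixes A :: "real^'d^'n"
    and f :: "real^'n \<Rightarrow> ereal" and g :: "real^'d \<Rightarrow> ereal"
    and \<gamma> \<mu> :: real and T :: nat
    and \<beta> \<eta> \<tau> :: "nat \<Rightarrow> real"
    and x xbar :: "nat \<Rightarrow> real^'d" and y :: "nat \<Rightarrow> real^'n"
    and u :: "real^'d" and v :: "real^'n"
  assumes f_proper: "proper_fun f" and f_closed: "closed_fun f" and f_convex: "convex_fun f"
    and g_proper: "proper_fun g" and g_closed: "closed_fun g" and g_convex: "convex_fun g"
    and \<gamma>_nonneg: "\<gamma> \<ge> 0" and f_smooth: "smooth_fun \<gamma> f"
    and \<mu>_nonneg: "\<mu> \<ge> 0" and g_strong: "strongly_convex_fun \<mu> g"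
    and T_pos: "T \<ge> 1"
    and \<beta>_pos: "\<And>t. \<beta> t > 0" and \<eta>_pos: "\<And>t. \<eta> t > 0" and \<tau>_pos: "\<And>t. \<tau> t > 0"
    and xbar_step: "\<And>t. xbar (Suc t) =
          prox (\<lambda>w. ereal (\<eta> t) * g w) (x t - \<eta> t *\<^sub>R (transpose A *v y t))"
    and y_step: "\<And>t. y (Suc t) =
          prox (\<lambda>w. ereal (\<tau> t) * conjugate f w) (y t + \<tau> t *\<^sub>R (A *v xbar (Suc t)))"
    and x_step: "\<And>t. x (Suc t) =
          prox (\<lambda>w. ereal (\<Sum>k\<le>t. \<beta> k) * g w)
               (x 0 - (\<Sum>k\<le>t. \<beta> k *\<^sub>R (transpose A *v y (Suc k))))"
    and step1: "\<And>t. t < T \<Longrightarrow> \<eta> t * (1 + (\<Sum>k<t. \<beta> k) * \<mu>) \<ge> \<beta> t"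
    and step2: "\<And>t. t < T \<Longrightarrow> \<eta> t * \<tau> t * (onorm (\<lambda>z. A *v z))\<^sup>2 \<le> 1"
    and step3: "\<And>t. t < T \<Longrightarrow> \<beta> (Suc t) / \<tau> (Suc t) \<le> \<beta> t / \<tau> t * (1 + \<gamma> * \<tau> t)"
  shows "saddleF g f A ((1 / (\<Sum>t<T. \<beta> t)) *\<^sub>R (\<Sum>t<T. \<beta> t *\<^sub>R xbar (Suc t))) v
       - saddleF g f A u ((1 / (\<Sum>t<T. \<beta> t)) *\<^sub>R (\<Sum>t<T. \<beta> t *\<^sub>R y (Suc t)))
     \<le> ereal ((1 / (\<Sum>t<T. \<beta> t)) *
          (\<beta> 0 / (2 * \<tau> 0) * (norm (y 0 - v))\<^sup>2 + 1 / 2 * (norm (x 0 - u))\<^sup>2))"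
proof -
  interpret dapd_iteration A f g \<gamma> \<mu> \<beta> \<eta> \<tau> x xbar y
    by unfold_locales (fact assms)+
  show ?thesis (is "_ \<le> ereal ?bound")
    unfolding x_mean_def[symmetric] y_mean_def[symmetric]
  proof (cases "g u = \<infinity> \<or> conjugate f v = \<infinity>")
    case True
    then show "saddleF g f A (x_mean T) v - saddleF g f A u (y_mean T) \<le> ereal ?bound"
      using saddle_gap_of_means_minf[OF T_pos] by simp
  next
    case False
    have "(\<Sum>t<T. \<beta> t) > 0" using T_pos \<beta>_pos by (intro sum_pos) (auto simp: lessThan_empty_iff)
    with False have "lagrangian (x_mean T) v - lagrangian u (y_mean T) \<le> ?bound"
      using order_trans[OF lagrangian_gap_of_means_le[OF T_pos]
          divide_right_mono[OF weighted_gap_sum_le[OF step1 step2 step3]]]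
      by auto
    with False show "saddleF g f A (x_mean T) v - saddleF g f A u (y_mean T) \<le> ereal ?bound"
      using saddleF_eq_lagrangian mean_iterates_bounds(1,3)[OF T_pos] by simp
  qed
qed

end
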